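(* Let $\mathcal{O}=(G,x,y)$ be a regular origami. Suppose that for every prime $p$ at least one of the following holds: (1) $\gcd\big(p,\operatorname{ord}(y)\cdot\operatorname{ord}(yx)\big)=1$; or (2) there exist $m_1,m_2\in\mathbb{Z}_{\ge 0}$ with $m_1\not\equiv m_2 \pmod p$ and $\gcd\big(p,\operatorname{ord}(xy^{-m_1})\cdot\operatorname{ord}(xy^{-m_2})\big)=1$. Then the Veech group $\mathrm{SL}(\mathcal{O})$ is a totally non-congruence group.
   Context: A regular origami $(G,x,y)$ is given by a finite group $G$ generated by two elements $x,y$: it is the translation surface obtained from unit squares indexed by the elements $g\in G$, where the right edge of square $g$ is glued to the left edge of square $gx$ and the top edge of square $g$ is glued to the bottom edge of square $gy$ (a normal cover of the torus with deck group $G$). Two regular origamis $(G,x,y)$, $(G',x',y')$ are identified if there is a group isomorphism $G\to G'$ with $x\mapsto x'$, $y\mapsto y'$. The group $\mathrm{SL}(2,\mathbb{Z})$ acts on regular origamis via $S\cdot(G,x,y)=(G,y^{-1},x)$ and $T\cdot(G,x,y)=(G,x,yx^{-1})$, where $S=\begin{pmatrix}0&-1\\1&0\end{pmatrix}$, $T=\begin{pmatrix}1&1\\0&1\end{pmatrix}$ generate $\mathrm{SL}(2,\mathbb{Z})$; this is the action by affine shearing of the square tiling. The Veech group $\mathrm{SL}(\mathcal{O})$ of a (nontrivial) regular origami is the stabilizer of $\mathcal{O}$ under this action; it is a finite index subgroup of $\mathrm{SL}(2,\mathbb{Z})$. A finite index subgroup $\Gamma\le\mathrm{SL}(2,\mathbb{Z})$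 is a totally non-congruence group if for every integer $n\ge 1$ the reduction map $\mathrm{SL}(2,\mathbb{Z})\to\mathrm{SL}(2,\mathbb{Z}/n\mathbb{Z})$ restricted to $\Gamma$ is surjective. *)

theory Defs
  imports "HOL-Algebra.Algebra" "HOL-Number_Theory.Number_Theory"
begin

text \<open>2x2 integer matrices [[a,b],[c,d]] are represented as tuples (a,b,c,d).\<close>
type_synonym mat2 = "int \<times> int \<times> int \<times> int"

fun mmul :: "mat2 \<Rightarrow> mat2 \<Rightarrow> mat2" where
  "mmul (a,b,c,e) (a2,b2,c2,e2) = (a * a2 + b * c2, a * b2 + b * e2, c * a2 + e * c2, c * b2 + e * e2)"

definition SL2Z :: "mat2 set" where
  "SL2Z = {M. case M of (a,b,c,e) \<Rightarrow> a * e - b * c = 1}"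

datatype gen = GS | GSi | GT | GTi

fun gen_mat :: "gen \<Rightarrow> mat2" where
  "gen_mat GS  = (0, -1, 1, 0)"
| "gen_mat GSi = (0, 1, -1, 0)"
| "gen_mat GT  = (1, 1, 0, 1)"
| "gen_mat GTi = (1, -1, 0, 1)"

definition word_mat :: "gen list \<Rightarrow> mat2" where
  "word_mat w = foldr (\<lambda>g M. mmul (gen_mat g) M) w (1,0,0,1)"

fun gen_act :: "('a, 'b) monoid_scheme \<Rightarrow> gen \<Rightarrow> 'a \<times> 'a \<Rightarrow> 'a \<times> 'a" where
  "gen_act G GS  (x,y) = (inv\<^bsub>G\<^esub> y, x)"
| "gen_act G GSi (x,y) = (y, inv\<^bsub>G\<^esub> x)"
| "gen_act G GT  (x,y) = (x, y \<otimes>\<^bsub>G\<^esub> inv\<^bsub>G\<^esub> x)"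
| "gen_act G GTi (x,y) = (x, y \<otimes>\<^bsub>G\<^esub> x)"

text \<open>A word g1...gk acts as g1.(g2.(...(gk.O))), matching the matrix g1*...*gk.\<close>
definition word_act :: "('a, 'b) monoid_scheme \<Rightarrow> gen list \<Rightarrow> 'a \<times> 'a \<Rightarrow> 'a \<times> 'a" where
  "word_act G w p = foldr (gen_act G) w p"

definition regular_origami :: "('a, 'b) monoid_scheme \<Rightarrow> 'a \<Rightarrow> 'a \<Rightarrow> bool" where
  "regular_origami G x y \<longleftrightarrow> group G \<and> finite (carrier G) \<and> x \<in> carrier G \<and> y \<in> carrier G
     \<and> generate G {x, y} = carrier G"

definition origami_equiv :: "('a, 'b) monoid_scheme \<Rightarrow> 'a \<times> 'a \<Rightarrow> 'a \<times> 'a \<Rightarrow> bool" where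
  "origami_equiv G p q \<longleftrightarrow> (\<exists>\<phi> \<in> iso G G. \<phi> (fst p) = fst q \<and> \<phi> (snd p) = snd q)"

definition veech_group :: "('a, 'b) monoid_scheme \<Rightarrow> 'a \<Rightarrow> 'a \<Rightarrow> mat2 set" where
  "veech_group G x y = {A \<in> SL2Z. \<exists>w. word_mat w = A \<and> origami_equiv G (word_act G w (x,y)) (x,y)}"

definition totally_non_congruence :: "mat2 set \<Rightarrow> bool" where
  "totally_non_congruence \<Gamma> \<longleftrightarrow>
     (\<forall>n::int. n \<ge> 1 \<longrightarrow> (\<forall>a b c e. [a * e - b * c = 1] (mod n) \<longrightarrow>
        (\<exists>(a1,b1,c1,d1) \<in> \<Gamma>. [a1 = a] (mod n) \<and> [b1 = b] (mod n) \<and> [c1 = c] (mod n) \<and> [d1 = e] (mod n))))"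

end

theory Submission
  imports Defs
begin

(* Let \<Gamma> be the group of matrices of those words in S, T that fix the pair (x, y) itself;
   it lies in the Veech group. Conjugates of T^n in \<Gamma> come from element orders: if ord y
   divides n then S^-1 T^n S fixes (x, y), and similarly for y x and for x y^-m. Under
   condition (1) or (2) at p, after one further conjugation \<Gamma> contains T^(a j) and
   L^d T^(b j) L^-d for all j, with a, b, d prime to p, where L is the lower unipotent matrix.
   Modulo p^e these give every T^t and L^d T^t L^-d, hence every L^t, and T and L generate
   SL(2, Z/p^e). The lifts can moreover be chosen trivial modulo any r prime to p
   (take j divisible by r), and such lifts for the prime powers of n multiply to a lift
   modulo n. *)

definition mat_I :: mat2 where "mat_I = (1, 0, 0, 1)"
definition mat_T :: "int \<Rightarrow> mat2" where "mat_T t = (1, t, 0, 1)"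
definition mat_L :: "int \<Rightarrow> mat2" where "mat_L t = (1, 0, t, 1)"
definition mat_S :: mat2 where "mat_S = (0, -1, 1, 0)"
definition mat_S_inv :: mat2 where "mat_S_inv = (0, 1, -1, 0)"

fun det2 :: "mat2 \<Rightarrow> int" where
  "det2 (a, b, c, e) = a * e - b * c"

fun mat_cong :: "int \<Rightarrow> mat2 \<Rightarrow> mat2 \<Rightarrow> bool" where
  "mat_cong q (a, b, c, e) (a', b', c', e') \<longleftrightarrow>
     [a = a'] (mod q) \<and> [b = b'] (mod q) \<and> [c = c'] (mod q) \<and> [e = e'] (mod q)"

definition mmul_closed :: "mat2 set \<Rightarrow> bool" where
  "mmul_closed \<Gamma> \<longleftrightarrow> (\<forall>A \<in> \<Gamma>. \<forall>B \<in> \<Gamma>. mmul A B \<in> \<Gamma>)"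

lemma mmul_closedD: "mmul_closed \<Gamma> \<Longrightarrow> A \<in> \<Gamma> \<Longrightarrow> B \<in> \<Gamma> \<Longrightarrow> mmul A B \<in> \<Gamma>"
  by (simp add: mmul_closed_def)

lemma mmul_assoc: "mmul (mmul A B) C = mmul A (mmul B C)"
  by (cases A; cases B; cases C) (simp add: algebra_simps)

lemma mmul_mat_I [simp]: "mmul mat_I A = A" "mmul A mat_I = A"
  by (cases A; simp add: mat_I_def)+

lemma mat_T_0 [simp]: "mat_T 0 = mat_I"
  by (simp add: mat_T_def mat_I_def)

lemma mat_L_0 [simp]: "mat_L 0 = mat_I"
  by (simp add: mat_L_def mat_I_def)

lemma det2_mmul: "det2 (mmul A B) = det2 A * det2 B"
  by (cases A; cases B) (simp add: algebra_simps)

lemma mat_cong_refl [simp]: "mat_cong q A A"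
  by (cases A) auto

lemma mat_cong_trans: "mat_cong q A B \<Longrightarrow> mat_cong q B C \<Longrightarrow> mat_cong q A C"
  by (cases A; cases B; cases C) (auto elim: cong_trans)

lemma mat_cong_mmul: "mat_cong q A A' \<Longrightarrow> mat_cong q B B' \<Longrightarrow> mat_cong q (mmul A B) (mmul A' B')"
  by (cases A; cases B; cases A'; cases B') (auto intro!: cong_add cong_mult)

lemma mat_cong_dvd_modulus: "mat_cong q A B \<Longrightarrow> q' dvd q \<Longrightarrow> mat_cong q' A B"
  by (cases A; cases B) (auto intro: cong_dvd_modulus)

lemma mat_cong_mult_modulus:
  "coprime q q' \<Longrightarrow> mat_cong q A B \<Longrightarrow> mat_cong q' A B \<Longrightarrow> mat_cong (q * q') A B"
  for q q' :: int
  by (cases A; cases B) (auto intro: coprime_cong_mult)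

lemma mat_cong_1 [simp]: "mat_cong 1 A B"
  by (cases A; cases B) auto

lemma mat_cong_mat_T: "[s = t] (mod q) \<Longrightarrow> mat_cong q (mat_T s) (mat_T t)"
  by (simp add: mat_T_def)

lemma mat_congI_dvd:
  "q dvd a - a' \<Longrightarrow> q dvd b - b' \<Longrightarrow> q dvd c - c' \<Longrightarrow> q dvd e - e' \<Longrightarrow>
   mat_cong q (a, b, c, e) (a', b', c', e')"
  by (simp add: cong_iff_dvd_diff)

lemma det2_cong_conj:
  assumes "mmul C C' = mat_I" and "[det2 M = 1] (mod q)"
  shows "[det2 (mmul (mmul C M) C') = 1] (mod q)"
proof -
  have "det2 C * det2 C' = 1"
    using arg_cong[OF assms(1), of det2] by (simp add: det2_mmul mat_I_def)
  then have "det2 (mmul (mmul C M) C') = det2 M"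
    by (simp add: det2_mmul algebra_simps)
  with assms(2) show ?thesis by simp
qed

lemma mat_L_cong_conj_unipotent:
  assumes "[\<delta> * u = 1] (mod q)"
  shows "mat_cong q
    (mmul (mmul (mat_T (-u)) (mmul (mmul (mat_L \<delta>) (mat_T (- s * u^2))) (mat_L (-\<delta>)))) (mat_T u))
    (mat_L s)"
proof -
  obtain k where k: "1 = \<delta> * u + q * k"
    using assms by (auto simp: cong_iff_lin)
  \<comment> \<open>an exact identity when \<open>\<delta> u = 1\<close>; the entrywise errors are multiples of \<open>q k\<close>\<close>
  show ?thesis
    unfolding mat_T_def mat_L_def mmul.simps
    apply (rule mat_congI_dvd)
       apply (rule dvdI[where k = "s * u^2 * \<delta> * k"]) using k apply Groebner_Basis.algebra
      apply (rule dvdI[where k = "- s * u^2 * q * k^2"]) using k apply Groebner_Basis.algebra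
     apply (rule dvdI[where k = "s * (q * k^2 - 2 * k)"]) using k apply Groebner_Basis.algebra
    apply (rule dvdI[where k = "- \<delta> * s * u^2 * k"]) using k apply Groebner_Basis.algebra
    done
qed

lemma upper_triangular_cong_word:
  assumes "[g * e = 1] (mod q)"
  shows "mat_cong q
    (mmul (mmul (mmul (mmul (mat_T g) (mat_L (-e))) (mat_T g)) mat_S) (mat_T (b * e)))
    (g, b, 0, e)"
proof -
  obtain k where k: "1 = g * e + q * k"
    using assms by (auto simp: cong_iff_lin)
  \<comment> \<open>an exact identity when \<open>g e = 1\<close>; the entrywise errors are multiples of \<open>q k\<close>\<close>
  show ?thesis
    unfolding mat_T_def mat_L_def mat_S_def mmul.simps
    apply (rule mat_congI_dvd)
       apply (rule dvdI[where k = "g * k"]) using k apply Groebner_Basis.algebra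
      apply (rule dvdI[where k = "- b * q * k^2 - k"]) using k apply Groebner_Basis.algebra
     apply (rule dvdI[where k = "k"]) using k apply Groebner_Basis.algebra
    apply (rule dvdI[where k = "k * b * e"]) using k apply Groebner_Basis.algebra
    done
qed

lemma exists_upper_triangular_cofactor:
  assumes closed: "mmul_closed S" and T: "\<And>t. mat_T t \<in> S" and "mat_S \<in> S"
  shows "\<exists>N g b e. N \<in> S \<and> det2 N = 1 \<and> M = mmul N (g, b, 0, e)"
proof -
  have "\<exists>N g b' e'. N \<in> S \<and> det2 N = 1 \<and> (a, b, c, e) = mmul N (g, b', 0, e')" for a b c e
  proof (induction c arbitrary: a b e rule: measure_induct_rule[where f = "\<lambda>c. nat \<bar>c\<bar>"])
    case (less c)
    show ?case
    proof (cases "c = 0")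
      case True
      then show ?thesis
        using T[of 0] by (intro exI[of _ mat_I]) (auto simp: mat_I_def)
    next
      case False
      define t where "t = a div c"
      have "nat \<bar>- (a mod c)\<bar> < nat \<bar>c\<bar>"
        using abs_mod_less[OF False, of a] False by simp
      from less[OF this, of c e "- (b - t * e)"] obtain N g b' e' where
        N: "N \<in> S" "det2 N = 1" "(c, e, - (a mod c), - (b - t * e)) = mmul N (g, b', 0, e')"
        by blast
      \<comment> \<open>one step of Euclid's algorithm on the first column\<close>
      have "(a, b, c, e) = mmul (mmul (mat_T t) mat_S) (c, e, - (a mod c), - (b - t * e))"
        using div_mult_mod_eq[of a c] by (simp add: mat_T_def mat_S_def t_def algebra_simps)
      also have "\<dots> = mmul (mmul (mmul (mat_T t) mat_S) N) (g, b', 0, e')"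
        by (simp only: N(3) mmul_assoc)
      finally have "(a, b, c, e) = mmul (mmul (mmul (mat_T t) mat_S) N) (g, b', 0, e')" .
      moreover have "mmul (mmul (mat_T t) mat_S) N \<in> S"
        using N(1) T \<open>mat_S \<in> S\<close> by (intro mmul_closedD[OF closed])
      moreover have "det2 (mmul (mmul (mat_T t) mat_S) N) = 1"
        by (simp add: det2_mmul N(2) mat_T_def mat_S_def)
      ultimately show ?thesis
        by blast
    qed
  qed
  then show ?thesis
    by (cases M) simp
qed

lemma SL2_mod_subset_saturated_monoid:
  assumes closed: "mmul_closed S"
    and saturated: "\<And>A B. mat_cong q A B \<Longrightarrow> A \<in> S \<Longrightarrow> B \<in> S"
    and T: "\<And>t. mat_T t \<in> S"
    and conj_T: "\<And>t. mmul (mmul (mat_L \<delta>) (mat_T t)) (mat_L (-\<delta>)) \<in> S"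
    and "coprime \<delta> q"
  shows "{M. [det2 M = 1] (mod q)} \<subseteq> S"
proof
  fix M assume "M \<in> {M. [det2 M = 1] (mod q)}"
  then have det: "[det2 M = 1] (mod q)" by simp
  have L: "mat_L s \<in> S" for s
  proof -
    obtain u where "[\<delta> * u = 1] (mod q)"
      using cong_solve_coprime_int[OF \<open>coprime \<delta> q\<close>] by blast
    have "mmul (mmul (mat_T (-u)) (mmul (mmul (mat_L \<delta>) (mat_T (- s * u^2))) (mat_L (-\<delta>))))
      (mat_T u) \<in> S"
      by (intro mmul_closedD[OF closed] T conj_T)
    with saturated mat_L_cong_conj_unipotent[OF \<open>[\<delta> * u = 1] (mod q)\<close>] show ?thesis
      by blast
  qed
  have "mmul (mmul (mat_T (-1)) (mat_L 1)) (mat_T (-1)) \<in> S"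
    by (intro mmul_closedD[OF closed] T L)
  moreover have "mmul (mmul (mat_T (-1)) (mat_L 1)) (mat_T (-1)) = mat_S"
    by (simp add: mat_S_def mat_T_def mat_L_def)
  ultimately have "mat_S \<in> S"
    by simp
  then obtain N g b e where N: "N \<in> S" "det2 N = 1" and M: "M = mmul N (g, b, 0, e)"
    using exists_upper_triangular_cofactor[OF closed T] by blast
  have "[g * e = 1] (mod q)"
    using det by (simp add: M det2_mmul N(2))
  moreover have "mmul (mmul (mmul (mmul (mat_T g) (mat_L (-e))) (mat_T g)) mat_S) (mat_T (b * e)) \<in> S"
    using \<open>mat_S \<in> S\<close> by (intro mmul_closedD[OF closed] T L)
  ultimately have "(g, b, 0, e) \<in> S"
    using saturated upper_triangular_cong_word by blast
  with N show "M \<in> S"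
    by (simp add: M closed mmul_closedD)
qed

lemma exists_nat_multiple_cong:
  fixes k :: nat and q r t :: int
  assumes "coprime (int k) q" "coprime q r" "q \<ge> 1" "r \<ge> 1"
  shows "\<exists>j::nat. [int (k * j) = t] (mod q) \<and> [int (k * j) = 0] (mod r)"
proof -
  have "coprime (int k * r) q"
    using assms(1,2) by (simp add: coprime_commute)
  then obtain u where u: "[int k * r * u = 1] (mod q)"
    using cong_solve_coprime_int by blast
  define J where "J = (r * u * t) mod (q * r)"
  have "[J = r * u * t] (mod q)" "[J = r * u * t] (mod r)"
    using mod_mod_cancel[of q "q * r" "r * u * t"] mod_mod_cancel[of r "q * r" "r * u * t"]
    by (simp_all add: J_def cong_def)
  then have "[int k * J = (int k * r * u) * t] (mod q)" "[int k * J = r * (int k * u * t)] (mod r)"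
    by (auto simp: ac_simps dest: cong_scalar_left[where d = "int k"])
  moreover have "[(int k * r * u) * t = t] (mod q)"
    using cong_mult[OF u cong_refl[of t]] by simp
  ultimately have "[int k * J = t] (mod q)" "[int k * J = 0] (mod r)"
    by (auto intro: cong_trans simp: cong_mult_self_left)
  moreover have "J \<ge> 0"
    using assms(3,4) by (simp add: J_def)
  ultimately show ?thesis
    by (intro exI[of _ "nat J"]) simp
qed

definition reduces_onto :: "mat2 set \<Rightarrow> int \<Rightarrow> int \<Rightarrow> bool" where
  "reduces_onto \<Gamma> q r \<longleftrightarrow>
     (\<forall>M. [det2 M = 1] (mod q) \<longrightarrow> (\<exists>A \<in> \<Gamma>. mat_cong q A M \<and> mat_cong r A mat_I))"

lemma reduces_onto_of_unipotents:
  fixes ka kb :: nat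
  assumes closed: "mmul_closed \<Gamma>"
    and "q \<ge> 1" "r \<ge> 1" "coprime q r"
    and "coprime (int ka) q" "coprime (int kb) q" "coprime \<delta> q"
    and "\<And>j. mat_T (int (ka * j)) \<in> \<Gamma>"
    and "\<And>j. mmul (mmul (mat_L \<delta>) (mat_T (int (kb * j)))) (mat_L (-\<delta>)) \<in> \<Gamma>"
  shows "reduces_onto \<Gamma> q r"
proof -
  define S where "S = {Z. \<exists>A \<in> \<Gamma>. mat_cong q A Z \<and> mat_cong r A mat_I}"
  have "mmul_closed S"
    unfolding mmul_closed_def S_def
    using mmul_closedD[OF closed] mat_cong_mmul[where A' = mat_I and B' = mat_I, simplified] mat_cong_mmul
    by blast
  moreover have "B \<in> S" if "mat_cong q A B" "A \<in> S" for A B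
    using that unfolding S_def by (blast intro: mat_cong_trans)
  moreover have conj_T: "mmul (mmul D (mat_T t)) D' \<in> S"
    if "mmul D D' = mat_I" "coprime (int k) q" "\<And>j. mmul (mmul D (mat_T (int (k * j)))) D' \<in> \<Gamma>"
    for D D' k t
  proof -
    obtain j where "[int (k * j) = t] (mod q)" "[int (k * j) = 0] (mod r)"
      using exists_nat_multiple_cong \<open>coprime (int k) q\<close> assms(2-4) by blast
    then have "mat_cong q (mat_T (int (k * j))) (mat_T t)" "mat_cong r (mat_T (int (k * j))) mat_I"
      by (simp_all add: mat_cong_mat_T flip: mat_T_0)
    then have "mat_cong q (mmul (mmul D (mat_T (int (k * j)))) D') (mmul (mmul D (mat_T t)) D')"
      and "mat_cong r (mmul (mmul D (mat_T (int (k * j)))) D') (mmul (mmul D mat_I) D')"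
      by (meson mat_cong_mmul mat_cong_refl)+
    with that show ?thesis
      unfolding S_def by (auto simp: mmul_assoc)
  qed
  moreover have "mat_T t \<in> S" for t
    using conj_T[of mat_I mat_I ka] assms(5,8) by simp
  moreover have "mmul (mmul (mat_L \<delta>) (mat_T t)) (mat_L (-\<delta>)) \<in> S" for t
    using conj_T[of "mat_L \<delta>" "mat_L (-\<delta>)" kb] assms(6,9) by (simp add: mat_L_def mat_I_def)
  ultimately have "{M. [det2 M = 1] (mod q)} \<subseteq> S"
    using SL2_mod_subset_saturated_monoid \<open>coprime \<delta> q\<close> by blast
  then show ?thesis
    unfolding reduces_onto_def S_def by blast
qed

lemma mmul_closed_conj:
  assumes "mmul C' C = mat_I" "mmul_closed \<Gamma>"
  shows "mmul_closed ((\<lambda>A. mmul (mmul C A) C') ` \<Gamma>)"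
proof -
  have "mmul (mmul (mmul C A) C') (mmul (mmul C B) C') = mmul (mmul C (mmul A B)) C'" for A B
    using assms(1) by (simp add: mmul_assoc flip: mmul_assoc[of C' C])
  with assms(2) show ?thesis
    unfolding mmul_closed_def by (auto simp: image_iff)
qed

lemma reduces_onto_conj:
  assumes inv: "mmul C C' = mat_I" "mmul C' C = mat_I"
    and onto: "reduces_onto ((\<lambda>A. mmul (mmul C A) C') ` \<Gamma>) q r"
  shows "reduces_onto \<Gamma> q r"
  unfolding reduces_onto_def
proof (intro allI impI)
  fix M assume "[det2 M = 1] (mod q)"
  then have "[det2 (mmul (mmul C M) C') = 1] (mod q)"
    using det2_cong_conj inv(1) by blast
  then obtain A where "A \<in> \<Gamma>" and A: "mat_cong q (mmul (mmul C A) C') (mmul (mmul C M) C')"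
    "mat_cong r (mmul (mmul C A) C') mat_I"
    using onto unfolding reduces_onto_def by blast
  have uncong: "mmul (mmul C' (mmul (mmul C Z) C')) C = Z" for Z
    using inv(2) by (simp add: mmul_assoc flip: mmul_assoc[of C' C])
  have "mat_cong q A M" "mat_cong r A (mmul C' C)"
    using mat_cong_mmul[OF mat_cong_mmul[OF mat_cong_refl A(1)] mat_cong_refl, of C' C]
      mat_cong_mmul[OF mat_cong_mmul[OF mat_cong_refl A(2)] mat_cong_refl, of C' C]
    by (simp_all add: uncong)
  with \<open>A \<in> \<Gamma>\<close> inv(2) show "\<exists>A \<in> \<Gamma>. mat_cong q A M \<and> mat_cong r A mat_I"
    by auto
qed

lemma reduces_onto_mult_modulus:
  assumes closed: "mmul_closed \<Gamma>" and "coprime a b"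
    and onto_a: "reduces_onto \<Gamma> a (r * b)" and onto_b: "reduces_onto \<Gamma> b (r * a)"
  shows "reduces_onto \<Gamma> (a * b) r"
  unfolding reduces_onto_def
proof (intro allI impI)
  fix M assume det: "[det2 M = 1] (mod a * b)"
  obtain A where A: "A \<in> \<Gamma>" "mat_cong a A M" "mat_cong (r * b) A mat_I"
    using onto_a cong_dvd_modulus[OF det] unfolding reduces_onto_def by (meson dvd_triv_left)
  obtain B where B: "B \<in> \<Gamma>" "mat_cong b B M" "mat_cong (r * a) B mat_I"
    using onto_b cong_dvd_modulus[OF det] unfolding reduces_onto_def by (meson dvd_triv_right)
  have "mat_cong a B mat_I" "mat_cong b A mat_I" "mat_cong r A mat_I" "mat_cong r B mat_I"
    using A(3) B(3) by (auto elim: mat_cong_dvd_modulus)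
  then have "mat_cong a (mmul A B) M" "mat_cong b (mmul A B) M" "mat_cong r (mmul A B) mat_I"
    using mat_cong_mmul[OF A(2), of B mat_I] mat_cong_mmul[OF _ B(2), of A mat_I]
      mat_cong_mmul[of r A mat_I B mat_I] by simp_all
  then have "mat_cong (a * b) (mmul A B) M" "mat_cong r (mmul A B) mat_I"
    using mat_cong_mult_modulus \<open>coprime a b\<close> by simp_all
  with A(1) B(1) closed show "\<exists>C \<in> \<Gamma>. mat_cong (a * b) C M \<and> mat_cong r C mat_I"
    by (blast intro: mmul_closedD)
qed

lemma reduces_onto_if_prime_powers:
  assumes closed: "mmul_closed \<Gamma>" and "mat_I \<in> \<Gamma>"
    and prime_power: "\<And>(p::nat) e r. Factorial_Ring.prime p \<Longrightarrow> r \<ge> 1 \<Longrightarrow> coprime (int p) r \<Longrightarrow>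
      reduces_onto \<Gamma> (int p ^ e) r"
  shows "n \<ge> 1 \<Longrightarrow> r \<ge> 1 \<Longrightarrow> coprime n r \<Longrightarrow> reduces_onto \<Gamma> n r"
proof (induction n arbitrary: r rule: measure_induct_rule[where f = nat])
  case (less n)
  show ?case
  proof (cases "n = 1")
    case True
    then show ?thesis
      using \<open>mat_I \<in> \<Gamma>\<close> by (auto simp: reduces_onto_def intro!: bexI[of _ mat_I])
  next
    case False
    then obtain p where p: "Factorial_Ring.prime p" "p dvd n"
      using less.prems(1) prime_divisor_exists[of n] by auto
    define e where "e = multiplicity p n"
    obtain n' where n: "n = p ^ e * n'" and "\<not> p dvd n'"
      using multiplicity_decompose'[of n p] less.prems(1) p(1) unfolding e_def
      by (metis not_one_le_zero not_prime_unit)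
    have "e \<noteq> 0"
      using p(2) \<open>\<not> p dvd n'\<close> n by (cases e) auto
    have "p > 1"
      using p(1) prime_gt_1_int by blast
    then have "p ^ e > 1"
      using \<open>e \<noteq> 0\<close> by simp
    then have "n' \<ge> 1"
      using less.prems(1) n zero_less_mult_pos[of "p ^ e" n'] by simp
    then have "n' < n"
      using n \<open>p ^ e > 1\<close> by simp
    have "coprime (p ^ e) n'"
      using prime_imp_coprime[OF p(1) \<open>\<not> p dvd n'\<close>] by simp
    moreover have "reduces_onto \<Gamma> (p ^ e) (r * n')"
    proof -
      have "coprime p r"
        using coprime_divisors[OF p(2) dvd_refl less.prems(3)] .
      then have "coprime (int (nat p)) (r * n')"
        using \<open>coprime (p ^ e) n'\<close> p(1) \<open>e \<noteq> 0\<close> prime_ge_0_int by simp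
      moreover have "r * n' \<ge> 1"
        using less.prems(2) \<open>n' \<ge> 1\<close> mult_mono[of 1 r 1 n'] by simp
      ultimately have "reduces_onto \<Gamma> (int (nat p) ^ e) (r * n')"
        using p(1) by (intro prime_power) simp_all
      with p(1) show ?thesis
        using prime_ge_0_int by simp
    qed
    moreover have "reduces_onto \<Gamma> n' (r * p ^ e)"
    proof (rule less.IH)
      show "r * p ^ e \<ge> 1"
        using less.prems(2) \<open>p ^ e > 1\<close> mult_mono[of 1 r 1 "p ^ e"] by simp
      show "coprime n' (r * p ^ e)"
        using less.prems(3) \<open>coprime (p ^ e) n'\<close> n by (simp add: coprime_commute)
    qed (use \<open>n' < n\<close> \<open>n' \<ge> 1\<close> in simp_all)
    ultimately show ?thesis
      using reduces_onto_mult_modulus[OF closed] n by simp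
  qed
qed

lemma word_mat_Nil [simp]: "word_mat [] = mat_I"
  by (simp add: word_mat_def mat_I_def)

lemma word_mat_Cons [simp]: "word_mat (g # w) = mmul (gen_mat g) (word_mat w)"
  by (simp add: word_mat_def)

lemma word_mat_append: "word_mat (v @ w) = mmul (word_mat v) (word_mat w)"
  by (induction v) (simp_all add: mmul_assoc)

lemma word_mat_replicate_GT: "word_mat (replicate n GT) = mat_T (int n)"
  by (induction n) (simp_all add: mat_T_def mat_I_def)

lemma word_mat_replicate_GTi: "word_mat (replicate n GTi) = mat_T (- int n)"
  by (induction n) (simp_all add: mat_T_def mat_I_def)

lemma det2_gen_mat: "det2 (gen_mat g) = 1"
  by (cases g) simp_all

lemma det2_word_mat: "det2 (word_mat w) = 1"
  by (induction w) (simp_all add: det2_mmul det2_gen_mat mat_I_def)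

lemma word_act_Nil [simp]: "word_act G [] p = p"
  by (simp add: word_act_def)

lemma word_act_Cons [simp]: "word_act G (g # w) p = gen_act G g (word_act G w p)"
  by (simp add: word_act_def)

lemma word_act_append: "word_act G (v @ w) p = word_act G v (word_act G w p)"
  by (simp add: word_act_def)

lemma (in group) word_act_replicate_GT:
  "a \<in> carrier G \<Longrightarrow> b \<in> carrier G \<Longrightarrow> word_act G (replicate n GT) (a, b) = (a, b \<otimes> inv a [^] n)"
  by (induction n) (simp_all add: m_assoc)

lemma (in group) word_act_replicate_GTi:
  "a \<in> carrier G \<Longrightarrow> b \<in> carrier G \<Longrightarrow> word_act G (replicate n GTi) (a, b) = (a, b \<otimes> a [^] n)"
  by (induction n) (simp_all add: m_assoc)

definition stabilizer_mats :: "('a, 'b) monoid_scheme \<Rightarrow> 'a \<Rightarrow> 'a \<Rightarrow> mat2 set" where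
  "stabilizer_mats G x y = word_mat ` {w. word_act G w (x, y) = (x, y)}"

lemma word_mat_in_stabilizer_mats:
  "word_act G w (x, y) = (x, y) \<Longrightarrow> word_mat w \<in> stabilizer_mats G x y"
  by (simp add: stabilizer_mats_def)

lemma mat_I_in_stabilizer_mats: "mat_I \<in> stabilizer_mats G x y"
  using word_mat_in_stabilizer_mats[of G "[]"] by simp

lemma mmul_closed_stabilizer_mats: "mmul_closed (stabilizer_mats G x y)"
  unfolding mmul_closed_def stabilizer_mats_def
  by (auto simp: word_act_append simp flip: word_mat_append intro: word_mat_in_stabilizer_mats)

lemma stabilizer_mats_subset_veech_group:
  assumes "group G"
  shows "stabilizer_mats G x y \<subseteq> veech_group G x y"
proof
  fix A assume "A \<in> stabilizer_mats G x y"
  then obtain w where w: "A = word_mat w" "word_act G w (x, y) = (x, y)"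
    unfolding stabilizer_mats_def by blast
  have "A \<in> SL2Z"
    using det2_word_mat[of w] by (cases A) (simp add: w(1) SL2Z_def)
  moreover have "origami_equiv G (word_act G w (x, y)) (x, y)"
    unfolding origami_equiv_def w(2) using id_iso[of G] by (intro bexI[of _ id]) auto
  ultimately show "A \<in> veech_group G x y"
    unfolding veech_group_def using w(1) by blast
qed

(* Each word below is a conjugate of T^n whose middle block multiplies one entry of the
   transformed pair by the n-th power of y, y x, resp. x y^-m, or of its inverse; so the
   word fixes (x, y) once the order of that element divides n. *)

lemma (in group) mat_L_in_stabilizer_mats:
  assumes "x \<in> carrier G" "y \<in> carrier G" "ord y dvd n"
  shows "mat_L (- int n) \<in> stabilizer_mats G x y"
proof -
  let ?w = "[GSi] @ replicate n GT @ [GS]"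
  have "word_act G ?w (x, y) = (x, y)"
    using assms by (simp add: word_act_append word_act_replicate_GT pow_eq_id)
  moreover have "word_mat ?w = mat_L (- int n)"
    by (simp add: word_mat_append word_mat_replicate_GT mat_T_def mat_L_def)
  ultimately show ?thesis
    by (metis word_mat_in_stabilizer_mats)
qed

lemma (in group) conj_mat_L_in_stabilizer_mats:
  assumes "x \<in> carrier G" "y \<in> carrier G" "ord (y \<otimes> x) dvd n"
  shows "mmul (mmul (mat_T 1) (mat_L (- int n))) (mat_T (-1)) \<in> stabilizer_mats G x y"
proof -
  let ?w = "[GT, GS] @ replicate n GT @ [GSi, GTi]"
  have "(y \<otimes> x) [^] n = \<one>"
    using assms by (simp add: pow_eq_id)
  then have "word_act G ?w (x, y) = (x, y)"
    using assms by (simp add: word_act_append word_act_replicate_GT nat_pow_inv m_assoc)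
  moreover have "word_mat ?w = mmul (mmul (mat_T 1) (mat_L (- int n))) (mat_T (-1))"
    by (simp add: word_mat_append word_mat_replicate_GT mat_T_def mat_L_def)
  ultimately show ?thesis
    by (metis word_mat_in_stabilizer_mats)
qed

lemma (in group) conj_mat_T_in_stabilizer_mats:
  assumes "x \<in> carrier G" "y \<in> carrier G" "ord (x \<otimes> inv (y [^] m)) dvd n"
  shows "mmul (mmul (mat_L (- int m)) (mat_T (int n))) (mat_L (int m)) \<in> stabilizer_mats G x y"
proof -
  let ?w = "[GSi] @ replicate m GT @ [GS] @ replicate n GT @ [GSi] @ replicate m GTi @ [GS]"
  have "(x \<otimes> inv (y [^] m)) [^] n = \<one>"
    using assms by (simp add: pow_eq_id)
  then have "word_act G ?w (x, y) = (x, y)"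
    using assms by (simp add: word_act_append word_act_replicate_GT word_act_replicate_GTi
        nat_pow_inv m_assoc)
  moreover have "word_mat ?w = mmul (mmul (mat_L (- int m)) (mat_T (int n))) (mat_L (int m))"
    by (simp add: word_mat_append word_mat_replicate_GT word_mat_replicate_GTi mat_T_def mat_L_def
        algebra_simps)
  ultimately show ?thesis
    by (metis word_mat_in_stabilizer_mats)
qed

lemma (in group) stabilizer_reduces_onto_if_coprime_ord_y_yx:
  assumes "x \<in> carrier G" "y \<in> carrier G"
    and "coprime (int (ord y)) q" "coprime (int (ord (y \<otimes> x))) q"
    and "q \<ge> 1" "r \<ge> 1" "coprime q r"
  shows "reduces_onto (stabilizer_mats G x y) q r"
proof (rule reduces_onto_conj[where C = mat_S and C' = mat_S_inv])
  let ?\<Gamma> = "(\<lambda>A. mmul (mmul mat_S A) mat_S_inv) ` stabilizer_mats G x y"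
  show inv: "mmul mat_S mat_S_inv = mat_I" "mmul mat_S_inv mat_S = mat_I"
    by (simp_all add: mat_S_def mat_S_inv_def mat_I_def)
  have T_mem: "mat_T (int (ord y * j)) \<in> ?\<Gamma>" for j
  proof (rule image_eqI)
    show "mat_L (- int (ord y * j)) \<in> stabilizer_mats G x y"
      using assms by (intro mat_L_in_stabilizer_mats) auto
  qed (simp add: mat_S_def mat_S_inv_def mat_T_def mat_L_def)
  have conj_T_mem: "mmul (mmul (mat_L (-1)) (mat_T (int (ord (y \<otimes> x) * j)))) (mat_L (- (-1)))
    \<in> ?\<Gamma>" for j
  proof (rule image_eqI)
    show "mmul (mmul (mat_T 1) (mat_L (- int (ord (y \<otimes> x) * j)))) (mat_T (-1))
      \<in> stabilizer_mats G x y"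
      using assms by (intro conj_mat_L_in_stabilizer_mats) auto
  qed (simp add: mat_S_def mat_S_inv_def mat_T_def mat_L_def algebra_simps)
  show "reduces_onto ?\<Gamma> q r"
  proof (rule reduces_onto_of_unipotents[where \<delta> = "-1"])
    show "mmul_closed ?\<Gamma>"
      using inv(2) mmul_closed_stabilizer_mats by (rule mmul_closed_conj)
  qed (fact assms(3-7) T_mem conj_T_mem | simp)+
qed

lemma (in group) stabilizer_reduces_onto_if_coprime_ord_x_y_pow:
  assumes "x \<in> carrier G" "y \<in> carrier G"
    and "coprime (int (ord (x \<otimes> inv (y [^] m1)))) q" "coprime (int (ord (x \<otimes> inv (y [^] m2)))) q"
    and "coprime (int m1 - int m2) q"
    and "q \<ge> 1" "r \<ge> 1" "coprime q r"
  shows "reduces_onto (stabilizer_mats G x y) q r"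
proof (rule reduces_onto_conj[where C = "mat_L (int m1)" and C' = "mat_L (- int m1)"])
  let ?\<Gamma> = "(\<lambda>A. mmul (mmul (mat_L (int m1)) A) (mat_L (- int m1))) ` stabilizer_mats G x y"
  show inv: "mmul (mat_L (int m1)) (mat_L (- int m1)) = mat_I"
    "mmul (mat_L (- int m1)) (mat_L (int m1)) = mat_I"
    by (simp_all add: mat_L_def mat_I_def)
  have conj_T_mem: "mmul (mmul (mat_L (int m1 - int m)) (mat_T (int (ord (x \<otimes> inv (y [^] m)) * j))))
      (mat_L (- (int m1 - int m))) \<in> ?\<Gamma>" for m j
  proof (rule image_eqI)
    show "mmul (mmul (mat_L (- int m)) (mat_T (int (ord (x \<otimes> inv (y [^] m)) * j)))) (mat_L (int m))
      \<in> stabilizer_mats G x y"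
      using assms by (intro conj_mat_T_in_stabilizer_mats) auto
  qed (simp add: mat_T_def mat_L_def algebra_simps)
  show "reduces_onto ?\<Gamma> q r"
  proof (rule reduces_onto_of_unipotents[where \<delta> = "int m1 - int m2"])
    show "mmul_closed ?\<Gamma>"
      using inv(2) mmul_closed_stabilizer_mats by (rule mmul_closed_conj)
    show "mat_T (int (ord (x \<otimes> inv (y [^] m1)) * j)) \<in> ?\<Gamma>" for j
      using conj_T_mem[of m1 j] by simp
  qed (fact assms(3-8) conj_T_mem)+
qed

lemma (in group) stabilizer_reduces_onto_prime_power:
  fixes p :: nat
  assumes "x \<in> carrier G" "y \<in> carrier G" and "Factorial_Ring.prime p"
    and "coprime p (ord y * ord (y \<otimes> x))
      \<or> (\<exists>m1 m2 :: nat. \<not> [m1 = m2] (mod p) \<and>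
           coprime p (ord (x \<otimes> inv (y [^] m1)) * ord (x \<otimes> inv (y [^] m2))))"
    and "r \<ge> 1" "coprime (int p) r"
  shows "reduces_onto (stabilizer_mats G x y) (int p ^ e) r"
proof -
  have q: "int p ^ e \<ge> 1" "coprime (int p ^ e) r"
    using assms(3,6) prime_gt_0_nat by (auto simp: Suc_le_eq)
  have coprime_pow: "coprime (int k) (int p ^ e)" if "coprime p k" for k
    using that by (simp add: coprime_commute)
  from assms(4) show ?thesis
  proof (elim disjE exE conjE)
    assume "coprime p (ord y * ord (y \<otimes> x))"
    then show ?thesis
      using assms(1,2,5) q coprime_pow
      by (intro stabilizer_reduces_onto_if_coprime_ord_y_yx) (auto simp: coprime_commute)
  next
    fix m1 m2 :: nat
    assume "\<not> [m1 = m2] (mod p)"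
      and "coprime p (ord (x \<otimes> inv (y [^] m1)) * ord (x \<otimes> inv (y [^] m2)))"
    moreover have "coprime (int m1 - int m2) (int p ^ e)"
    proof -
      have "\<not> int p dvd int m1 - int m2"
        using \<open>\<not> [m1 = m2] (mod p)\<close> by (simp add: cong_int_iff[symmetric] cong_iff_dvd_diff)
      then have "coprime (int p) (int m1 - int m2)"
        using assms(3) by (intro prime_imp_coprime) simp_all
      then show ?thesis
        by (simp add: coprime_commute)
    qed
    ultimately show ?thesis
      using assms(1,2,5) q coprime_pow
      by (intro stabilizer_reduces_onto_if_coprime_ord_x_y_pow) (auto simp: coprime_commute)
  qed
qed

theorem mainTheorem2:
  fixes G :: "('a, 'b) monoid_scheme" and x y :: 'a
  assumes "regular_origami G x y"
    and "\<And>p::nat. Factorial_Ring.prime p \<Longrightarrow>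
      coprime p (group.ord G y * group.ord G (y \<otimes>\<^bsub>G\<^esub> x))
      \<or> (\<exists>m1 m2 :: nat. \<not> [m1 = m2] (mod p) \<and>
           coprime p (group.ord G (x \<otimes>\<^bsub>G\<^esub> inv\<^bsub>G\<^esub> (y [^]\<^bsub>G\<^esub> m1))
                    * group.ord G (x \<otimes>\<^bsub>G\<^esub> inv\<^bsub>G\<^esub> (y [^]\<^bsub>G\<^esub> m2))))"
  shows "totally_non_congruence (veech_group G x y)"
proof -
  interpret group G
    using assms(1) by (simp add: regular_origami_def)
  have xy: "x \<in> carrier G" "y \<in> carrier G"
    using assms(1) by (simp_all add: regular_origami_def)
  have onto: "reduces_onto (stabilizer_mats G x y) n 1" if "n \<ge> 1" for n
  proof (rule reduces_onto_if_prime_powers[OF mmul_closed_stabilizer_mats mat_I_in_stabilizer_mats])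
    show "reduces_onto (stabilizer_mats G x y) (int p ^ e) r"
      if "Factorial_Ring.prime p" "r \<ge> 1" "coprime (int p) r" for p e r
      using xy that(1) assms(2)[OF that(1)] that(2,3) by (rule stabilizer_reduces_onto_prime_power)
  qed (use that in simp_all)
  show ?thesis
    unfolding totally_non_congruence_def
  proof (intro allI impI)
    fix n a b c e :: int
    assume "n \<ge> 1" "[a * e - b * c = 1] (mod n)"
    then obtain A where "A \<in> stabilizer_mats G x y" "mat_cong n A (a, b, c, e)"
      using onto[of n] unfolding reduces_onto_def by fastforce
    with stabilizer_mats_subset_veech_group[OF is_group]
    show "\<exists>(a1, b1, c1, d1) \<in> veech_group G x y.
        [a1 = a] (mod n) \<and> [b1 = b] (mod n) \<and> [c1 = c] (mod n) \<and> [d1 = e] (mod n)"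
      by (cases A) auto
  qed
qed

end
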